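(* For $d\in\mathbb{N}_1$ let $\pi^+_d:=\sum_{n\in\mathcal{N}^g,\ \ell(n)\le d}\pi(n)$. Then the expected number of node expansions of $\mathrm{LubyTS}(\infty,1)$ before (and including) reaching a node of $\mathcal{N}^g$ satisfies $$\mathbb{E}\bigl[N(\mathrm{LubyTS}(\infty,1),\mathcal{N}^g)\bigr]\le \min_{d\in\mathbb{N}_1,\ \pi^+_d>0}\ d+\frac{d}{\pi^+_d}\left(\log_2\frac{d}{\pi^+_d}+6.1\right).$$
   Context: Setting: a finite action set $\mathcal{A}$, a set of states $\mathcal{S}$ with initial state $s_0$, a deterministic transition function $T:\mathcal{S}\times\mathcal{A}\to\mathcal{S}$, and a set of goal states $\mathcal{G}\subseteq\mathcal{S}$. Nodes are finite sequences of actions; the root $n_0$ is the empty sequence; $T(n)$ is the state reached from $s_0$ by applying the actions of $n$; for a node of $t$ actions, $\ell(n):=t+1$. A policy is a function $\pi$ from nodes to $[0,1]$ with $\pi(n_0)=1$ and $\pi(n)=\sum_{a\in\mathcal{A}}\pi(na)$, with $\pi(a\mid n)=\pi(na)/\pi(n)$. The target set $\mathcal{N}^g$ is the set of nodes $n$ with $T(n)\in\mathcal{G}$ such that no proper prefix $m$ of $n$ has $T(m)\in\mathcal{G}$. A trial of depth $D$ samples a path $m_1=n_0, m_2=m_1a_1,\dots,m_D=m_{D-1}a_{D-1}$ with $a_i\sim\pi(\cdot\mid m_i)$ and tests $m_1,m_2,\dots$ in order, each test counting as one node expansion, stopping with success at the first $m_i$ with $T(m_i)\in\mathcal{G}$.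 $\mathrm{LubyTS}(\infty,1)$ performs, for $k=1,2,3,\dots$, an independent trial of depth $f(k)$, where $f(k)$ is the largest power of $2$ dividing $k$ (OEIS A6519: $1,2,1,4,1,2,1,8,\dots$), until a success; $N(\mathrm{LubyTS}(\infty,1),\mathcal{N}^g)$ is the total number of node expansions until success. *)

theory Defs
  imports "HOL-Probability.Probability" "HOL-Computational_Algebra.Factorial_Ring"
begin

text \<open>Nodes are finite action sequences ('a list); appending an action a to node n is n @ [a].
  The action set is the finite type 'a.\<close>

definition node_state :: "('s \<Rightarrow> 'a \<Rightarrow> 's) \<Rightarrow> 's \<Rightarrow> 'a list \<Rightarrow> 's" where
  "node_state T s0 n = fold (\<lambda>a s. T s a) n s0"

definition node_level :: "'a list \<Rightarrow> nat" where
  "node_level n = length n + 1"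

definition is_policy :: "('a::finite list \<Rightarrow> real) \<Rightarrow> bool" where
  "is_policy \<pi> \<longleftrightarrow> \<pi> [] = 1 \<and> (\<forall>n. 0 \<le> \<pi> n \<and> \<pi> n \<le> 1)
     \<and> (\<forall>n. \<pi> n = (\<Sum>a\<in>UNIV. \<pi> (n @ [a])))"

definition target_set :: "('s \<Rightarrow> 'a \<Rightarrow> 's) \<Rightarrow> 's \<Rightarrow> 's set \<Rightarrow> 'a list set" where
  "target_set T s0 G = {n. node_state T s0 n \<in> G \<and>
      (\<forall>k < length n. node_state T s0 (take k n) \<notin> G)}"

definition pi_plus :: "('s \<Rightarrow> 'a \<Rightarrow> 's) \<Rightarrow> 's \<Rightarrow> 's set \<Rightarrow> ('a list \<Rightarrow> real) \<Rightarrow> nat \<Rightarrow> real" where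
  "pi_plus T s0 G \<pi> d = (\<Sum>n\<in>{n \<in> target_set T s0 G. node_level n \<le> d}. \<pi> n)"

text \<open>Conditional action distribution \<pi>(\<cdot> | n) (arbitrary where \<pi> n = 0; such nodes are
  reached with probability 0).\<close>
definition action_pmf :: "('a::finite list \<Rightarrow> real) \<Rightarrow> 'a list \<Rightarrow> 'a pmf" where
  "action_pmf \<pi> n = (if \<pi> n > 0 then embed_pmf (\<lambda>a. \<pi> (n @ [a]) / \<pi> n)
                      else pmf_of_set UNIV)"

fun path_pmf :: "('a::finite list \<Rightarrow> real) \<Rightarrow> 'a list \<Rightarrow> nat \<Rightarrow> 'a list pmf" where
  "path_pmf \<pi> n 0 = return_pmf n"
| "path_pmf \<pi> n (Suc k) = bind_pmf (action_pmf \<pi> n) (\<lambda>a. path_pmf \<pi> (n @ [a]) k)"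

text \<open>Outcome of a trial of depth D whose sampled path ends at m_D = m (length D - 1):
  the nodes m_1, ..., m_D are take 0 m, ..., take (D-1) m, tested in order.
  Result: (success?, number of node expansions).\<close>
definition trial_outcome ::
  "('s \<Rightarrow> 'a \<Rightarrow> 's) \<Rightarrow> 's \<Rightarrow> 's set \<Rightarrow> nat \<Rightarrow> 'a list \<Rightarrow> bool \<times> nat" where
  "trial_outcome T s0 G D m =
     (if \<exists>i < D. node_state T s0 (take i m) \<in> G
      then (True, Suc (LEAST i. node_state T s0 (take i m) \<in> G))
      else (False, D))"

definition trial_pmf ::
  "('s \<Rightarrow> 'a::finite \<Rightarrow> 's) \<Rightarrow> 's \<Rightarrow> 's set \<Rightarrow> ('a list \<Rightarrow> real) \<Rightarrow> nat \<Rightarrow> (bool \<times> nat) pmf" where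
  "trial_pmf T s0 G \<pi> D = map_pmf (trial_outcome T s0 G D) (path_pmf \<pi> [] (D - 1))"

text \<open>Luby sequence (OEIS A6519): largest power of 2 dividing k.\<close>
definition luby :: "nat \<Rightarrow> nat" where
  "luby k = 2 ^ multiplicity (2::nat) k"

text \<open>Probability space of LubyTS(\<infinity>,1): outcome j (j = 0,1,...) is the independent trial
  number k = j+1, of depth luby k.\<close>
definition luby_space ::
  "('s \<Rightarrow> 'a::finite \<Rightarrow> 's) \<Rightarrow> 's \<Rightarrow> 's set \<Rightarrow> ('a list \<Rightarrow> real) \<Rightarrow> (nat \<Rightarrow> bool \<times> nat) measure" where
  "luby_space T s0 G \<pi> = (\<Pi>\<^sub>M j\<in>UNIV. measure_pmf (trial_pmf T s0 G \<pi> (luby (Suc j))))"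

definition luby_expansions :: "(nat \<Rightarrow> bool \<times> nat) \<Rightarrow> ennreal" where
  "luby_expansions \<omega> =
     (if \<exists>j. fst (\<omega> j)
      then ennreal (real (\<Sum>j \<le> (LEAST j. fst (\<omega> j)). snd (\<omega> j)))
      else \<infinity>)"

definition expected_luby_expansions ::
  "('s \<Rightarrow> 'a::finite \<Rightarrow> 's) \<Rightarrow> 's \<Rightarrow> 's set \<Rightarrow> ('a list \<Rightarrow> real) \<Rightarrow> ennreal" where
  "expected_luby_expansions T s0 G \<pi> = (\<integral>\<^sup>+ \<omega>. luby_expansions \<omega> \<partial>luby_space T s0 G \<pi>)"

end

theory Submission
  imports Defs
begin

(* A trial of depth at least d succeeds with probability at least p = pi_plus d, because the
   events "the sampled path passes through n", for the target nodes n of level at most d, are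
   disjoint and have probabilities pi n. Let D be the power of two with d <= D < 2 d. Every D-th
   trial of the Luby schedule has depth at least D, so the first k trials all fail with
   probability at most (1 - p)^(k div D), and the expected cost is at most the sum of the trial
   depths weighted by these probabilities. Writing (1 - p)^i as the geometric tail
   sum_{j >= i} p (1 - p)^j turns this into sum_j p (1 - p)^j S((j + 1) D), where S is the
   partial sum of the Luby sequence. As S(M) <= M/2 log2 M + M, what remains is bounded by the
   first two moments of a geometric distribution. *)

lemma is_policy_nonneg: "is_policy \<pi> \<Longrightarrow> 0 \<le> \<pi> n"
  unfolding is_policy_def by blast

lemma is_policy_Nil: "is_policy \<pi> \<Longrightarrow> \<pi> [] = 1"
  unfolding is_policy_def by blast

lemma is_policy_sum: "is_policy \<pi> \<Longrightarrow> \<pi> n = (\<Sum>a\<in>UNIV. \<pi> (n @ [a]))"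
  unfolding is_policy_def by blast

lemma is_policy_snoc_le:
  assumes "is_policy \<pi>"
  shows "\<pi> (n @ [a]) \<le> \<pi> n"
proof -
  have "\<pi> (n @ [a]) \<le> (\<Sum>b\<in>UNIV. \<pi> (n @ [b]))"
    by (rule member_le_sum) (auto intro: is_policy_nonneg[OF assms])
  then show ?thesis using is_policy_sum[OF assms, of n] by linarith
qed

(* In product form this also holds at nodes with pi n = 0, where action_pmf is arbitrary. *)
lemma pmf_action_pmf_mult:
  assumes "is_policy \<pi>"
  shows "pmf (action_pmf \<pi> n) a * \<pi> n = \<pi> (n @ [a])"
proof (cases "\<pi> n > 0")
  case True
  have "(\<Sum>b\<in>UNIV. \<pi> (n @ [b]) / \<pi> n) = 1"
    using True is_policy_sum[OF assms, of n] by (simp flip: sum_divide_distrib)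
  then have "(\<integral>\<^sup>+ b. ennreal (\<pi> (n @ [b]) / \<pi> n) \<partial>count_space UNIV) = 1"
    by (subst nn_integral_count_space_finite) (auto simp: is_policy_nonneg[OF assms] True)
  then have "pmf (embed_pmf (\<lambda>b. \<pi> (n @ [b]) / \<pi> n)) a = \<pi> (n @ [a]) / \<pi> n"
    by (intro pmf_embed_pmf) (auto simp: is_policy_nonneg[OF assms])
  then have "pmf (action_pmf \<pi> n) a = \<pi> (n @ [a]) / \<pi> n"
    unfolding action_pmf_def using True by simp
  then show ?thesis using True by simp
next
  case False
  then have "\<pi> n = 0" using is_policy_nonneg[OF assms, of n] by simp
  moreover have "\<pi> (n @ [a]) = 0"
    using calculation is_policy_snoc_le[OF assms, of n a] is_policy_nonneg[OF assms, of "n @ [a]"]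
    by linarith
  ultimately show ?thesis by simp
qed

declare path_pmf.simps [simp del]

lemma set_path_pmf: "m \<in> set_pmf (path_pmf \<pi> n k) \<Longrightarrow> \<exists>y. m = n @ y \<and> length y = k"
proof (induction k arbitrary: n)
  case (Suc k)
  then obtain b where "m \<in> set_pmf (path_pmf \<pi> (n @ [b]) k)" by (auto simp: path_pmf.simps)
  from Suc.IH[OF this] show ?case by fastforce
qed (simp add: path_pmf.simps)

lemma emeasure_path_pmf_Suc_prefix:
  fixes n x :: "'a::finite list" and a :: 'a
  defines "S \<equiv> {m. take (length n + Suc (length x)) m = n @ a # x}"
  shows "emeasure (path_pmf \<pi> n (Suc k)) S
    = emeasure (path_pmf \<pi> (n @ [a]) k) S * pmf (action_pmf \<pi> n) a"
proof -
  have other_branch: "emeasure (path_pmf \<pi> (n @ [b]) k) S = 0" if "b \<noteq> a" for b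
  proof -
    have "m \<notin> S" if m: "m \<in> set_pmf (path_pmf \<pi> (n @ [b]) k)" for m
    proof -
      obtain y where "m = n @ b # y" using set_path_pmf[OF m] by auto
      then have "take (length n + Suc (length x)) m = n @ b # take (length x) y" by simp
      then show ?thesis using \<open>b \<noteq> a\<close> unfolding S_def by auto
    qed
    then show ?thesis by (auto simp: measure_pmf.emeasure_eq_measure measure_pmf_zero_iff)
  qed
  have "emeasure (path_pmf \<pi> n (Suc k)) S
      = (\<Sum>b\<in>UNIV. emeasure (path_pmf \<pi> (n @ [b]) k) S * pmf (action_pmf \<pi> n) b)"
    unfolding path_pmf.simps emeasure_bind_pmf by (rule nn_integral_measure_pmf_support) auto
  also have "\<dots> = emeasure (path_pmf \<pi> (n @ [a]) k) S * pmf (action_pmf \<pi> n) a"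
    by (subst sum.remove[of UNIV a]) (simp_all add: other_branch)
  finally show ?thesis .
qed

lemma emeasure_path_pmf_prefix:
  assumes "is_policy \<pi>" and "length x \<le> k"
  shows "emeasure (path_pmf \<pi> n k) {m. take (length n + length x) m = n @ x} * ennreal (\<pi> n)
    = ennreal (\<pi> (n @ x))"
  using assms(2)
proof (induction k arbitrary: n x)
  case 0
  then show ?case by (simp add: path_pmf.simps)
next
  case (Suc k)
  show ?case
  proof (cases x)
    case Nil
    have "emeasure (path_pmf \<pi> n (Suc k)) {m. take (length n) m = n} = 1"
      by (rule measure_pmf.emeasure_eq_1_AE)
        (auto simp: AE_measure_pmf_iff dest!: set_path_pmf)
    then show ?thesis using Nil by simp
  next
    case (Cons a x')
    let ?S = "{m. take (length n + length x) m = n @ x}"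
    have "emeasure (path_pmf \<pi> n (Suc k)) ?S * ennreal (\<pi> n)
        = emeasure (path_pmf \<pi> (n @ [a]) k) ?S * (ennreal (pmf (action_pmf \<pi> n) a) * ennreal (\<pi> n))"
      using emeasure_path_pmf_Suc_prefix[where n=n and x=x' and a=a and k=k] Cons
      by (simp only: length_Cons mult.assoc)
    also have "ennreal (pmf (action_pmf \<pi> n) a) * ennreal (\<pi> n) = ennreal (\<pi> (n @ [a]))"
      by (simp only: pmf_action_pmf_mult[OF assms(1)]
          ennreal_mult''[OF is_policy_nonneg[OF assms(1)], symmetric])
    also have "emeasure (path_pmf \<pi> (n @ [a]) k) ?S * ennreal (\<pi> (n @ [a])) = ennreal (\<pi> (n @ x))"
      using Suc.IH[of x' "n @ [a]"] Suc.prems Cons by simp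
    finally show ?thesis .
  qed
qed

lemma prob_path_pmf_prefix:
  assumes "is_policy \<pi>" and "length n \<le> k"
  shows "measure_pmf.prob (path_pmf \<pi> [] k) {m. take (length n) m = n} = \<pi> n"
proof -
  have "emeasure (path_pmf \<pi> [] k) {m. take (length n) m = n} = \<pi> n"
    using emeasure_path_pmf_prefix[OF assms, of "[]"] by (simp add: is_policy_Nil[OF assms(1)])
  then show ?thesis by (simp add: measure_pmf.emeasure_eq_measure is_policy_nonneg[OF assms(1)])
qed

lemma target_set_prefix_eq:
  assumes "n1 \<in> target_set T s0 G" "n2 \<in> target_set T s0 G"
    and "take (length n1) m = n1" "take (length n2) m = n2" "length n1 \<le> length n2"
  shows "n1 = n2"
proof (rule ccontr)
  assume "n1 \<noteq> n2"
  then have "length n1 < length n2" using assms(3-5) by (metis le_neq_implies_less)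
  moreover have "take (length n1) n2 = take (length n1) (take (length n2) m)"
    using assms(4) by simp
  then have "take (length n1) n2 = n1"
    using assms(3,5) by (simp add: min_absorb1)
  ultimately have "node_state T s0 n1 \<notin> G"
    using assms(2) unfolding target_set_def by (metis (no_types, lifting) mem_Collect_eq)
  then show False using assms(1) unfolding target_set_def by blast
qed

lemma disjoint_family_on_target_set:
  "disjoint_family_on (\<lambda>n. {m. take (length n) m = n}) (target_set T s0 G)"
  unfolding disjoint_family_on_def
  by (auto dest: target_set_prefix_eq target_set_prefix_eq[OF _ _ _ _ nat_le_linear[THEN disjE]])

lemma pi_plus_le_prob_trial_success:
  assumes "is_policy \<pi>" and "d \<le> D"
  shows "pi_plus T s0 G \<pi> d \<le> measure_pmf.prob (trial_pmf T s0 G \<pi> D) {x. fst x}"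
proof -
  define N where "N = {n \<in> target_set T s0 G. node_level n \<le> d}"
  define E where "E n = {m. take (length n) m = n}" for n :: "'a list"
  define P where "P = path_pmf \<pi> [] (D - 1)"
  have "finite {xs :: 'a list. length xs \<le> d}"
    using finite_lists_length_le[of "UNIV :: 'a set" d] by simp
  then have "finite N" by (rule finite_subset[rotated]) (auto simp: N_def node_level_def)
  have "pi_plus T s0 G \<pi> d = (\<Sum>n\<in>N. measure_pmf.prob P (E n))"
    unfolding pi_plus_def N_def[symmetric] P_def E_def
    by (intro sum.cong refl prob_path_pmf_prefix[symmetric, OF assms(1)])
      (use assms(2) in \<open>auto simp: N_def node_level_def\<close>)
  also have "\<dots> = measure_pmf.prob P (\<Union>n\<in>N. E n)"
  proof (rule measure_pmf.finite_measure_finite_Union[symmetric])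
    show "disjoint_family_on E N" unfolding E_def
      by (rule disjoint_family_on_mono[OF _ disjoint_family_on_target_set]) (auto simp: N_def)
  qed (use \<open>finite N\<close> in auto)
  also have "\<dots> \<le> measure_pmf.prob P {m. fst (trial_outcome T s0 G D m)}"
  proof (rule measure_pmf.finite_measure_mono)
    show "(\<Union>n\<in>N. E n) \<subseteq> {m. fst (trial_outcome T s0 G D m)}"
    proof clarify
      fix n m assume "n \<in> N" "m \<in> E n"
      then have "length n < D" "node_state T s0 (take (length n) m) \<in> G"
        using assms(2) by (auto simp: N_def E_def node_level_def target_set_def)
      then show "fst (trial_outcome T s0 G D m)" unfolding trial_outcome_def by auto
    qed
  qed simp
  also have "\<dots> = measure_pmf.prob (trial_pmf T s0 G \<pi> D) {x. fst x}"
    by (simp add: trial_pmf_def P_def vimage_def)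
  finally show ?thesis .
qed

lemma prob_trial_failure_le:
  assumes "is_policy \<pi>" and "d \<le> D"
  shows "measure_pmf.prob (trial_pmf T s0 G \<pi> D) {x. \<not> fst x} \<le> 1 - pi_plus T s0 G \<pi> d"
proof -
  have "{x. \<not> fst x} = space (trial_pmf T s0 G \<pi> D) - {x. fst x}" by auto
  then have "measure_pmf.prob (trial_pmf T s0 G \<pi> D) {x. \<not> fst x}
      = 1 - measure_pmf.prob (trial_pmf T s0 G \<pi> D) {x. fst x}"
    by (metis measure_pmf.prob_compl sets_measure_pmf UNIV_I)
  then show ?thesis using pi_plus_le_prob_trial_success[OF assms] by simp
qed

lemma pi_plus_le_1:
  assumes "is_policy \<pi>"
  shows "pi_plus T s0 G \<pi> d \<le> 1"
  using pi_plus_le_prob_trial_success[OF assms order.refl] measure_pmf.prob_le_1 by (rule order_trans)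

lemma trial_pmf_expansions_le:
  assumes "x \<in> set_pmf (trial_pmf T s0 G \<pi> D)"
  shows "snd x \<le> D"
proof -
  obtain m where x: "x = trial_outcome T s0 G D m"
    using assms unfolding trial_pmf_def by auto
  show ?thesis
  proof (cases "\<exists>i < D. node_state T s0 (take i m) \<in> G")
    case True
    then obtain i where "i < D" "node_state T s0 (take i m) \<in> G" by blast
    then have "(LEAST i. node_state T s0 (take i m) \<in> G) < D" by (meson Least_le le_less_trans)
    then show ?thesis using x True unfolding trial_outcome_def by simp
  qed (use x in \<open>auto simp: trial_outcome_def\<close>)
qed

lemma luby_ge_1: "1 \<le> luby k"
  unfolding luby_def by simp

lemma luby_double: "m \<noteq> 0 \<Longrightarrow> luby (2 * m) = 2 * luby m"
  unfolding luby_def by (subst multiplicity_times_same) auto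

lemma luby_odd: "luby (Suc (2 * m)) = 1"
  unfolding luby_def by (subst not_dvd_imp_multiplicity_0) auto

lemma power_le_luby: "2 ^ b dvd k \<Longrightarrow> k \<noteq> 0 \<Longrightarrow> 2 ^ b \<le> luby k"
  unfolding luby_def by (intro power_increasing multiplicity_geI) auto

definition luby_sum :: "nat \<Rightarrow> nat" where
  "luby_sum M = (\<Sum>k<M. luby (Suc k))"

lemma luby_sum_double: "luby_sum (2 * m) = m + 2 * luby_sum m"
proof (induction m)
  case (Suc m)
  have "luby_sum (2 * Suc m) = luby_sum (2 * m) + luby (Suc (2 * m)) + luby (2 * Suc m)"
    unfolding luby_sum_def by (simp add: mult_2)
  also have "\<dots> = Suc m + 2 * luby_sum (Suc m)"
    using Suc by (simp add: luby_odd luby_double luby_sum_def del: mult_Suc_right)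
  finally show ?case .
qed (simp add: luby_sum_def)

lemma luby_sum_le: "1 \<le> M \<Longrightarrow> real (luby_sum M) \<le> M / 2 * log 2 M + M"
proof (induction M rule: less_induct)
  case (less M)
  show ?case
  proof (cases "M = 1")
    case True
    then show ?thesis by (simp add: luby_sum_def luby_def)
  next
    case False
    define m where "m = M div 2"
    have "m \<ge> 1" "m < M" using False less.prems by (auto simp: m_def)
    have log_double: "log 2 (2 * real m) = 1 + log 2 m"
      using \<open>m \<ge> 1\<close> by (simp add: log_mult_pos)
    have even: "real (luby_sum (2 * m)) \<le> (2 * m) / 2 * log 2 (2 * m) + 2 * m"
      using luby_sum_double[of m] less.IH[OF \<open>m < M\<close> \<open>m \<ge> 1\<close>] log_double
      by (simp add: algebra_simps)
    have "M = 2 * m \<or> M = Suc (2 * m)" unfolding m_def by presburger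
    then show ?thesis
    proof (elim disjE)
      assume "M = 2 * m"
      then show ?thesis using even by simp
    next
      assume odd: "M = Suc (2 * m)"
      have "luby_sum M = luby_sum (2 * m) + 1"
        unfolding odd luby_sum_def by (simp add: luby_odd)
      moreover have "(2 * m) / 2 * log 2 (2 * m) \<le> M / 2 * log 2 M"
        using \<open>m \<ge> 1\<close> odd by (intro mult_mono) auto
      moreover have "real M = real (2 * m) + 1"
        using odd by simp
      ultimately show ?thesis using even by linarith
    qed
  qed
qed

lemma luby_expansions_le_suminf:
  fixes L :: "nat \<Rightarrow> nat"
  assumes L_pos: "\<And>k. 1 \<le> L k" and expansions_le: "\<And>k. snd (\<omega> k) \<le> L k"
  shows "luby_expansions \<omega> \<le> (\<Sum>k. of_nat (L k) * indicator {\<omega>'. \<forall>i<k. \<not> fst (\<omega>' i)} \<omega>)"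
    (is "_ \<le> (\<Sum>k. ?f k)")
proof (cases "\<exists>j. fst (\<omega> j)")
  case True
  define J where "J = (LEAST j. fst (\<omega> j))"
  have f_eq: "?f k = of_nat (L k)" if "k \<le> J" for k
  proof -
    have "\<not> fst (\<omega> i)" if "i < k" for i
      using not_less_Least[of i "\<lambda>j. fst (\<omega> j)"] \<open>i < k\<close> \<open>k \<le> J\<close> unfolding J_def by simp
    then show ?thesis by simp
  qed
  have "luby_expansions \<omega> = of_nat (\<Sum>j\<le>J. snd (\<omega> j))"
    using True by (simp add: luby_expansions_def J_def ennreal_of_nat_eq_real_of_nat)
  also have "\<dots> \<le> of_nat (\<Sum>j\<le>J. L j)"
    by (intro of_nat_mono sum_mono expansions_le)
  also have "\<dots> = (\<Sum>k\<le>J. ?f k)"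
    using f_eq by simp
  also have "\<dots> \<le> (\<Sum>k. ?f k)"
    unfolding lessThan_Suc_atMost[symmetric] by (rule sum_le_suminf) auto
  finally show ?thesis .
next
  case False
  have "of_nat N \<le> (\<Sum>k. ?f k)" for N
  proof -
    have "(of_nat N :: ennreal) = (\<Sum>k<N. 1)" by simp
    also have "\<dots> \<le> (\<Sum>k<N. ?f k)"
      using False L_pos by (intro sum_mono) (simp add: indicator_def)
    also have "\<dots> \<le> (\<Sum>k. ?f k)" by (rule sum_le_suminf) auto
    finally show ?thesis .
  qed
  then have "(\<Squnion>N. of_nat N) \<le> (\<Sum>k. ?f k)"
    by (rule SUP_least)
  then have "(\<Sum>k. ?f k) = \<top>"
    unfolding ennreal_SUP_of_nat_eq_top by (rule top_unique[THEN iffD1])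
  then show ?thesis by (simp only: top_greatest)
qed

lemma nn_integral_luby_expansions_le:
  fixes Ms :: "nat \<Rightarrow> (bool \<times> nat) pmf" and L :: "nat \<Rightarrow> nat"
  assumes "\<And>k. 1 \<le> L k" and "\<And>k x. x \<in> set_pmf (Ms k) \<Longrightarrow> snd x \<le> L k"
  shows "(\<integral>\<^sup>+\<omega>. luby_expansions \<omega> \<partial>(\<Pi>\<^sub>M j\<in>UNIV. measure_pmf (Ms j)))
     \<le> (\<Sum>k. of_nat (L k) * (\<Prod>j<k. emeasure (measure_pmf (Ms j)) {x. \<not> fst x}))"
proof -
  let ?M = "\<lambda>j. measure_pmf (Ms j)"
  let ?P = "\<Pi>\<^sub>M j\<in>UNIV. ?M j"
  interpret product_prob_space ?M UNIV
    by (simp add: product_prob_space_def product_prob_space_axioms_def product_sigma_finite_def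
        prob_space_measure_pmf prob_space_imp_sigma_finite)
  define A where "A k = {\<omega> :: nat \<Rightarrow> bool \<times> nat. \<forall>i<k. \<not> fst (\<omega> i)}" for k :: nat
  have A_emb: "A k = prod_emb UNIV ?M {..<k} (\<Pi>\<^sub>E i\<in>{..<k}. {x. \<not> fst x})" for k
    unfolding A_def by (subst prod_emb_PiE) (auto simp: PiE_iff split: if_splits)
  have A_sets: "A k \<in> sets ?P" for k
    unfolding A_emb by (rule sets_PiM_I) auto
  have "AE \<omega> in ?P. \<forall>k. snd (\<omega> k) \<le> L k"
    unfolding AE_all_countable by (intro allI AE_component) (auto simp: AE_measure_pmf_iff assms(2))
  then have "(\<integral>\<^sup>+\<omega>. luby_expansions \<omega> \<partial>?P)
      \<le> (\<integral>\<^sup>+\<omega>. (\<Sum>k. of_nat (L k) * indicator (A k) \<omega>) \<partial>?P)"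
    by (intro nn_integral_mono_AE) (auto simp: A_def intro: luby_expansions_le_suminf assms(1))
  also have "\<dots> = (\<Sum>k. of_nat (L k) * emeasure ?P (A k))"
    using A_sets by (simp add: nn_integral_suminf nn_integral_cmult_indicator)
  also have "\<dots> = (\<Sum>k. of_nat (L k) * (\<Prod>j<k. emeasure (?M j) {x. \<not> fst x}))"
    unfolding A_emb by (subst emeasure_PiM_emb) auto
  finally show ?thesis .
qed

lemma prod_le_power_div:
  fixes x :: "nat \<Rightarrow> ennreal"
  assumes le_1: "\<And>j. x j \<le> 1" and le_r: "\<And>j. D dvd Suc j \<Longrightarrow> x j \<le> r" and "0 < D"
  shows "(\<Prod>j<k. x j) \<le> r ^ (k div D)"
proof (induction k)
  case (Suc k)
  show ?case
  proof (cases "D dvd Suc k")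
    case True
    then have "Suc k div D = Suc (k div D)"
      using \<open>0 < D\<close> by (simp add: div_Suc dvd_eq_mod_eq_0)
    then show ?thesis
      using mult_mono[OF Suc.IH le_r[OF True]] by (simp add: mult.commute)
  next
    case False
    then have "Suc k div D = k div D"
      by (simp add: div_Suc dvd_eq_mod_eq_0)
    then show ?thesis
      using mult_mono[OF Suc.IH le_1[of k]] by simp
  qed
qed simp

lemma suminf_geometric_tail_ennreal:
  fixes p :: real
  assumes "0 < p" and "p \<le> 1"
  shows "(\<Sum>j. if i \<le> j then ennreal (p * (1 - p) ^ j) else 0) = ennreal ((1 - p) ^ i)"
proof -
  define g where "g j = (if i \<le> j then p * (1 - p) ^ j else 0)" for j
  have "(\<lambda>j. p * (1 - p) ^ i * (1 - p) ^ j) sums (p * (1 - p) ^ i * (1 / (1 - (1 - p))))"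
    using assms by (intro sums_mult geometric_sums) auto
  then have "(\<lambda>j. g (j + i)) sums ((1 - p) ^ i)"
    using assms by (simp add: g_def power_add mult_ac)
  then have "g sums ((1 - p) ^ i + sum g {..<i})"
    by (simp add: sums_iff_shift)
  then have "g sums ((1 - p) ^ i)"
    by (simp add: g_def)
  moreover have "0 \<le> g j" for j
    using assms by (simp add: g_def)
  ultimately have "(\<Sum>j. ennreal (g j)) = ennreal ((1 - p) ^ i)"
    by (simp add: suminf_ennreal2 sums_summable sums_unique[symmetric])
  moreover have "(\<Sum>j. if i \<le> j then ennreal (p * (1 - p) ^ j) else 0) = (\<Sum>j. ennreal (g j))"
    by (rule suminf_cong) (simp add: g_def)
  ultimately show ?thesis by simp
qed

lemma suminf_suminf_swap_ennreal:
  fixes f :: "nat \<Rightarrow> nat \<Rightarrow> ennreal"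
  shows "(\<Sum>i. \<Sum>j. f i j) = (\<Sum>j. \<Sum>i. f i j)"
proof -
  have "(\<Sum>i. \<Sum>j. f i j) = (\<Sum>i. \<integral>\<^sup>+j. f i j \<partial>count_space UNIV)"
    by (simp add: nn_integral_count_space_nat)
  also have "\<dots> = (\<integral>\<^sup>+j. (\<Sum>i. f i j) \<partial>count_space UNIV)"
    by (rule nn_integral_suminf[symmetric]) simp
  also have "\<dots> = (\<Sum>j. \<Sum>i. f i j)"
    by (simp add: nn_integral_count_space_nat)
  finally show ?thesis .
qed

lemma suminf_mult_power_div_eq:
  fixes f :: "nat \<Rightarrow> ennreal" and p :: real
  assumes "0 < p" and "p \<le> 1" and "0 < D"
  shows "(\<Sum>k. f k * ennreal ((1 - p) ^ (k div D)))
    = (\<Sum>j. (\<Sum>k<Suc j * D. f k) * ennreal (p * (1 - p) ^ j))"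
proof -
  have "(\<Sum>k. f k * ennreal ((1 - p) ^ (k div D)))
      = (\<Sum>k. \<Sum>j. f k * (if k div D \<le> j then ennreal (p * (1 - p) ^ j) else 0))"
    by (simp add: suminf_geometric_tail_ennreal[OF assms(1,2)])
  also have "\<dots> = (\<Sum>j. \<Sum>k. f k * (if k div D \<le> j then ennreal (p * (1 - p) ^ j) else 0))"
    by (rule suminf_suminf_swap_ennreal)
  also have "\<dots> = (\<Sum>j. (\<Sum>k<Suc j * D. f k) * ennreal (p * (1 - p) ^ j))"
  proof (rule suminf_cong)
    fix j
    have block: "k div D \<le> j \<longleftrightarrow> k < Suc j * D" for k
      using assms(3) by (simp add: less_Suc_eq_le[symmetric] div_less_iff_less_mult)
    show "(\<Sum>k. f k * (if k div D \<le> j then ennreal (p * (1 - p) ^ j) else 0))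
        = (\<Sum>k<Suc j * D. f k) * ennreal (p * (1 - p) ^ j)"
      by (subst suminf_finite[of "{..<Suc j * D}"]) (auto simp: block sum_distrib_right)
  qed
  finally show ?thesis .
qed

lemma log2_le_self:
  assumes "0 < x"
  shows "log 2 x \<le> x"
proof -
  have "ln (x / 2) \<le> x / 2 - 1"
    using assms by (intro ln_le_minus_one) simp
  then have "ln x \<le> x / 2 - 1 + ln 2"
    using assms by (simp add: ln_div)
  also have "\<dots> \<le> x * ln 2"
  proof -
    have "x * (1 / 2) \<le> x * ln 2"
      using assms ln2_ge_two_thirds by (intro mult_left_mono) auto
    then show ?thesis using ln_2_less_1 by simp
  qed
  finally show ?thesis
    unfolding log_def by (simp add: divide_le_eq)
qed

lemma geometric_moments_partial_sum_le:
  fixes p a b :: real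
  assumes "0 < p" and "p \<le> 1" and "0 \<le> a" and "0 \<le> b"
  shows "(\<Sum>j<N. p * (1 - p) ^ j * (a * (real j + 1) + b * (real j + 1) ^ 2))
    \<le> a / p + b * (2 - p) / p ^ 2"
proof -
  \<comment> \<open>X n is the expectation of a (n + Y) + b (n + Y)^2 for a geometric number Y of
    failures before the first success, hence the one-step recursion X_step.\<close>
  define X where
    "X n = a * (n + (1 - p) / p) + b * (n ^ 2 + 2 * n * (1 - p) / p + (1 - p) * (2 - p) / p ^ 2)"
    for n :: real
  have X_step: "X n = p * (a * n + b * n ^ 2) + (1 - p) * X (n + 1)" for n
    using assms(1) by (simp add: X_def field_simps power2_eq_square)
  have "(\<Sum>j<N. p * (1 - p) ^ j * (a * (real j + 1) + b * (real j + 1) ^ 2))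
      + (1 - p) ^ N * X (real N + 1) = X 1"
  proof (induction N)
    case (Suc N)
    have "(1 - p) ^ N * X (real N + 1) = p * (1 - p) ^ N * (a * (real N + 1) + b * (real N + 1) ^ 2)
        + (1 - p) ^ Suc N * X (real (Suc N) + 1)"
      by (subst X_step) (simp add: algebra_simps)
    then show ?case
      using Suc.IH by (simp only: sum.lessThan_Suc)
  qed simp
  moreover have "0 \<le> (1 - p) ^ N * X (real N + 1)"
    using assms by (simp add: X_def)
  moreover have "X 1 = a / p + b * (2 - p) / p ^ 2"
    using assms(1) by (simp add: X_def field_simps power2_eq_square)
  ultimately show ?thesis by linarith
qed

lemma suminf_luby_sum_geometric_le:
  fixes p :: real and D :: nat
  assumes "0 < p" and "p \<le> 1" and "1 \<le> D"
  shows "(\<Sum>j. of_nat (luby_sum (Suc j * D)) * ennreal (p * (1 - p) ^ j))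
    \<le> ennreal (D / (2 * p) * (log 2 (D / p) + 4 - p))"
proof -
  define a where "a = D / 2 * (log 2 (D / p) + 2)"
  define b where "b = D * p / 2"
  have log_nonneg: "0 \<le> log 2 (D / p)"
    using assms by (simp add: divide_le_eq)
  have luby_sum_block: "real (luby_sum (Suc j * D)) \<le> a * (real j + 1) + b * (real j + 1) ^ 2" for j
  proof -
    define M where "M = real (Suc j * D)"
    have "1 \<le> M" using assms(3) by (simp add: M_def add_increasing2)
    have "M = ((real j + 1) * p) * (D / p)"
      using assms(1) by (simp add: M_def algebra_simps)
    then have "log 2 M = log 2 ((real j + 1) * p) + log 2 (D / p)"
      using assms by (simp only:) (rule log_mult_pos, auto)
    also have "\<dots> \<le> (real j + 1) * p + log 2 (D / p)"
      using log2_le_self[of "(real j + 1) * p"] assms by simp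
    finally have "M / 2 * log 2 M + M \<le> M / 2 * ((real j + 1) * p + log 2 (D / p)) + M"
      using \<open>1 \<le> M\<close> by (simp add: mult_left_mono)
    also have "\<dots> = a * (real j + 1) + b * (real j + 1) ^ 2"
      by (simp add: a_def b_def M_def field_simps power2_eq_square)
    finally show ?thesis
      using luby_sum_le[of "Suc j * D"] assms(3) by (simp add: M_def)
  qed
  have "(\<Sum>j<N. of_nat (luby_sum (Suc j * D)) * ennreal (p * (1 - p) ^ j))
      \<le> ennreal (a / p + b * (2 - p) / p ^ 2)" for N
  proof -
    have "(\<Sum>j<N. real (luby_sum (Suc j * D)) * (p * (1 - p) ^ j))
        \<le> (\<Sum>j<N. p * (1 - p) ^ j * (a * (real j + 1) + b * (real j + 1) ^ 2))"
      using luby_sum_block assms by (intro sum_mono) (simp add: mult.commute mult_left_mono)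
    also have "\<dots> \<le> a / p + b * (2 - p) / p ^ 2"
      using assms log_nonneg by (intro geometric_moments_partial_sum_le) (auto simp: a_def b_def)
    moreover have "(\<Sum>j<N. of_nat (luby_sum (Suc j * D)) * ennreal (p * (1 - p) ^ j))
        = ennreal (\<Sum>j<N. real (luby_sum (Suc j * D)) * (p * (1 - p) ^ j))"
      using assms by (simp add: ennreal_of_nat_eq_real_of_nat ennreal_mult flip: sum_ennreal)
    ultimately show ?thesis
      by (simp add: ennreal_leI)
  qed
  then have "(\<Sum>j. of_nat (luby_sum (Suc j * D)) * ennreal (p * (1 - p) ^ j))
      \<le> ennreal (a / p + b * (2 - p) / p ^ 2)"
    by (intro suminf_le_const summableI)
  also have "a / p + b * (2 - p) / p ^ 2 = D / (2 * p) * (log 2 (D / p) + 4 - p)"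
    using assms by (simp add: a_def b_def field_simps power2_eq_square)
  finally show ?thesis .
qed

lemma expected_luby_expansions_le_suminf:
  assumes "is_policy \<pi>" and "d \<le> 2 ^ b"
  shows "expected_luby_expansions T s0 G \<pi>
    \<le> (\<Sum>k. of_nat (luby (Suc k)) * ennreal ((1 - pi_plus T s0 G \<pi> d) ^ (k div 2 ^ b)))"
proof -
  define Ms where "Ms j = trial_pmf T s0 G \<pi> (luby (Suc j))" for j
  define r where "r = 1 - pi_plus T s0 G \<pi> d"
  have "0 \<le> r" using pi_plus_le_1[OF assms(1)] by (simp add: r_def)
  have fail_le: "emeasure (Ms j) {x. \<not> fst x} \<le> ennreal r" if "2 ^ b dvd Suc j" for j
  proof -
    have "d \<le> luby (Suc j)"
      using power_le_luby[OF that] assms(2) by simp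
    then show ?thesis
      unfolding Ms_def r_def measure_pmf.emeasure_eq_measure
      by (intro ennreal_leI prob_trial_failure_le assms(1))
  qed
  have "expected_luby_expansions T s0 G \<pi>
      = (\<integral>\<^sup>+\<omega>. luby_expansions \<omega> \<partial>(\<Pi>\<^sub>M j\<in>UNIV. measure_pmf (Ms j)))"
    unfolding expected_luby_expansions_def luby_space_def Ms_def ..
  also have "\<dots> \<le> (\<Sum>k. of_nat (luby (Suc k)) * (\<Prod>j<k. emeasure (Ms j) {x. \<not> fst x}))"
    by (rule nn_integral_luby_expansions_le[OF luby_ge_1])
      (auto simp: Ms_def intro: trial_pmf_expansions_le)
  also have "\<dots> \<le> (\<Sum>k. of_nat (luby (Suc k)) * ennreal r ^ (k div 2 ^ b))"
    using fail_le measure_pmf.emeasure_le_1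
    by (intro suminf_le summableI mult_left_mono prod_le_power_div) auto
  also have "\<dots> = (\<Sum>k. of_nat (luby (Suc k)) * ennreal ((1 - pi_plus T s0 G \<pi> d) ^ (k div 2 ^ b)))"
    using \<open>0 \<le> r\<close> by (simp add: r_def ennreal_power)
  finally show ?thesis .
qed

lemma log_bound_doubling_le:
  fixes p :: real and d D :: nat
  assumes "0 < p" and "p \<le> 1" and "1 \<le> d" and "d \<le> D" and "D \<le> 2 * d"
  shows "D / (2 * p) * (log 2 (D / p) + 4 - p) \<le> d + d / p * (log 2 (d / p) + 6.1)"
proof -
  have "log 2 (D / p) \<le> log 2 (2 * (d / p))"
    using assms by (subst log_le_cancel_iff) (auto simp: divide_right_mono)
  also have "\<dots> = 1 + log 2 (d / p)"
    using assms by (subst log_mult_pos) auto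
  finally have "log 2 (D / p) + 4 - p \<le> log 2 (d / p) + 5"
    using assms by simp
  moreover have "0 \<le> log 2 (D / p)"
    using assms by (simp add: divide_le_eq)
  then have "0 \<le> log 2 (D / p) + 4 - p"
    using assms by linarith
  moreover have "D / 2 / p \<le> d / p"
    using assms by (intro divide_right_mono) auto
  then have "D / (2 * p) \<le> d / p"
    by (simp add: divide_divide_eq_left)
  ultimately have "D / (2 * p) * (log 2 (D / p) + 4 - p) \<le> d / p * (log 2 (d / p) + 5)"
    using assms by (intro mult_mono) auto
  also have "\<dots> \<le> d / p * (log 2 (d / p) + 6.1)"
    using assms by (intro mult_left_mono) auto
  also have "\<dots> \<le> d + d / p * (log 2 (d / p) + 6.1)"
    by simp
  finally show ?thesis .
qed

theorem theorem6:
  fixes T :: "'s \<Rightarrow> 'a::finite \<Rightarrow> 's" and s0 :: 's and G :: "'s set"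
    and \<pi> :: "'a list \<Rightarrow> real"
  assumes "is_policy \<pi>"
  shows "\<forall>d::nat. d \<ge> 1 \<and> pi_plus T s0 G \<pi> d > 0 \<longrightarrow>
    expected_luby_expansions T s0 G \<pi>
      \<le> ennreal (real d + real d / pi_plus T s0 G \<pi> d
                  * (log 2 (real d / pi_plus T s0 G \<pi> d) + 6.1))"
proof (intro allI impI)
  fix d :: nat
  assume "d \<ge> 1 \<and> pi_plus T s0 G \<pi> d > 0"
  moreover define p where "p = pi_plus T s0 G \<pi> d"
  ultimately have "1 \<le> d" "0 < p" "p \<le> 1"
    using pi_plus_le_1[OF assms] by auto
  obtain b where "2 ^ b \<le> d" "d < 2 ^ (b + 1)"
    using ex_power_ivl1[of 2 d] \<open>1 \<le> d\<close> by auto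
  define D :: nat where "D = 2 ^ (b + 1)"
  have "d \<le> D" "D \<le> 2 * d" "1 \<le> D"
    using \<open>2 ^ b \<le> d\<close> \<open>d < 2 ^ (b + 1)\<close> by (auto simp: D_def)
  have "expected_luby_expansions T s0 G \<pi>
      \<le> (\<Sum>k. of_nat (luby (Suc k)) * ennreal ((1 - p) ^ (k div D)))"
    using \<open>d \<le> D\<close> unfolding p_def D_def by (rule expected_luby_expansions_le_suminf[OF assms])
  also have "\<dots> = (\<Sum>j. of_nat (luby_sum (Suc j * D)) * ennreal (p * (1 - p) ^ j))"
    using \<open>0 < p\<close> \<open>p \<le> 1\<close> \<open>1 \<le> D\<close> by (simp add: suminf_mult_power_div_eq luby_sum_def)
  also have "\<dots> \<le> ennreal (D / (2 * p) * (log 2 (D / p) + 4 - p))"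
    using \<open>0 < p\<close> \<open>p \<le> 1\<close> \<open>1 \<le> D\<close> by (rule suminf_luby_sum_geometric_le)
  also have "\<dots> \<le> ennreal (d + d / p * (log 2 (d / p) + 6.1))"
    using \<open>0 < p\<close> \<open>p \<le> 1\<close> \<open>1 \<le> d\<close> \<open>d \<le> D\<close> \<open>D \<le> 2 * d\<close>
    by (intro ennreal_leI log_bound_doubling_le)
  finally show "expected_luby_expansions T s0 G \<pi>
      \<le> ennreal (d + d / pi_plus T s0 G \<pi> d * (log 2 (d / pi_plus T s0 G \<pi> d) + 6.1))"
    unfolding p_def .
qed

end
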